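(* With notation as in the context, let $\overline{\mathcal P}=\{T^l(W): W\in\mathcal V,\ 0\le l\le|W|-1\}$. Then: (1) for each $k\ge1$ the sets $W\in\mathcal V$ with $|W|=k$ form a partition of $Y_k^0$, and $\overline{\mathcal P}$ is a quasi-partition of $X$; (2) $\overline{\mathcal P}$ is finer than $\mathcal P\cup\{E\}$ and than $\{Y_k^l: Y_k^l\ne\emptyset\}$; (3) if $\overline Z\in\overline{\mathcal P}$ and $\overline Z\subseteq Y_k^0$, then $T^i(\overline Z)\in\overline{\mathcal P}$ for $1\le i\le k-1$; and $\overline{\mathcal P}$ is the coarsest quasi-partition of $X$ with properties (2) and (3). Moreover, $\chi_{\overline Z}\in\mathcal B$ for every $\overline Z\in\overline{\mathcal P}$.
   Context: Let $X$ be an infinite, totally disconnected, compact metrizable space, $T$ a homeomorphism of $X$, $\mu$ a full (positive on nonempty open sets), ergodic, $T$-invariant Borel probability measure, $K$ a field with involution, $C_K(X)$ the $*$-algebra of locally constant functions $X\to K$, $\mathcal A=C_K(X)\rtimes_T\mathbb Z$ the algebraic crossed product (finite sums $\sum f_it^i$, $tf=(f\circ T^{-1})t$, $(ft^i)^*=t^{-i}f^*$). Let $E$ be a nonempty clopen set, $\mathcal P$ a partition of $X\setminus E$ (finite family of nonempty pairwise disjoint clopen sets with union $X\setminus E$), and $\mathcal B$ the unital $*$-subalgebra of $\mathcal A$ generated by $\{\chi_Zt:Z\in\mathcal P\}$. $\mathcal V$ is the set of nonempty sets $W=E\cap T^{-1}(Z_1)\cap\cdots\cap T^{-k+1}(Z_{k-1})\cap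 T^{-k}(E)$ with $k\ge1$, $Z_1,\dots,Z_{k-1}\in\mathcal P$, and $|W|:=k$. With $r_E(x)=\min\{l>0:T^l(x)\in E\}$ the first return map on $E$, $Y_k^l=T^l(r_E^{-1}(k))$ for $0\le l\le k-1$. A quasi-partition of $X$ is a finite or countable family of nonempty pairwise disjoint clopen sets whose union has full $\mu$-measure; a quasi-partition (or partition) $\mathcal Q_2$ is finer than $\mathcal Q_1$ if each member of $\mathcal Q_2$ is contained in a member of $\mathcal Q_1$. *)

theory Defs
  imports "HOL-Probability.Probability"
begin

definition clopen :: "'a::topological_space set \<Rightarrow> bool" where
  "clopen S \<longleftrightarrow> open S \<and> closed S"

definition totally_disconnected_space :: "'a::topological_space itself \<Rightarrow> bool" where
  "totally_disconnected_space _ \<longleftrightarrow>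
     (\<forall>S::'a set. connected S \<longrightarrow> S = {} \<or> (\<exists>x. S = {x}))"

definition Tz :: "('a \<Rightarrow> 'a) \<Rightarrow> ('a \<Rightarrow> 'a) \<Rightarrow> int \<Rightarrow> 'a \<Rightarrow> 'a" where
  "Tz T Tinv i = (if 0 \<le> i then T ^^ nat i else Tinv ^^ nat (- i))"

definition full_measure :: "'a::topological_space measure \<Rightarrow> bool" where
  "full_measure \<mu> \<longleftrightarrow> (\<forall>U. open U \<and> U \<noteq> {} \<longrightarrow> measure \<mu> U > 0)"

definition T_invariant :: "('a::topological_space \<Rightarrow> 'a) \<Rightarrow> 'a measure \<Rightarrow> bool" where
  "T_invariant T \<mu> \<longleftrightarrow> (\<forall>A \<in> sets borel. emeasure \<mu> (T -` A) = emeasure \<mu> A)"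

definition ergodic :: "('a::topological_space \<Rightarrow> 'a) \<Rightarrow> 'a measure \<Rightarrow> bool" where
  "ergodic T \<mu> \<longleftrightarrow> (\<forall>A \<in> sets borel. T -` A = A \<longrightarrow> measure \<mu> A = 0 \<or> measure \<mu> A = 1)"

definition partition_of :: "'a::topological_space set \<Rightarrow> 'a set set \<Rightarrow> bool" where
  "partition_of S Q \<longleftrightarrow> finite Q \<and> (\<forall>A\<in>Q. A \<noteq> {} \<and> clopen A)
     \<and> (\<forall>A\<in>Q. \<forall>B\<in>Q. A \<noteq> B \<longrightarrow> A \<inter> B = {}) \<and> \<Union>Q = S"

definition quasi_partition :: "'a::topological_space measure \<Rightarrow> 'a set set \<Rightarrow> bool" where
  "quasi_partition \<mu> Q \<longleftrightarrow> countable Q \<and> (\<forall>A\<in>Q. A \<noteq> {} \<and> clopen A)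
     \<and> (\<forall>A\<in>Q. \<forall>B\<in>Q. A \<noteq> B \<longrightarrow> A \<inter> B = {}) \<and> measure \<mu> (\<Union>Q) = 1"

definition finer :: "'a set set \<Rightarrow> 'a set set \<Rightarrow> bool" where
  "finer Q2 Q1 \<longleftrightarrow> (\<forall>A\<in>Q2. \<exists>B\<in>Q1. A \<subseteq> B)"

text \<open>Vk T E P k: the sets W = E \<inter> T^{-1}Z_1 \<inter> ... \<inter> T^{-k+1}Z_{k-1} \<inter> T^{-k}E that are
  nonempty, i.e. the members W of V with |W| = k.\<close>
definition Vk :: "('a \<Rightarrow> 'a) \<Rightarrow> 'a set \<Rightarrow> 'a set set \<Rightarrow> nat \<Rightarrow> 'a set set" where
  "Vk T E P k = {W. W \<noteq> {} \<and> 1 \<le> k \<and> (\<exists>Z::nat \<Rightarrow> 'a set. (\<forall>j\<in>{1..<k}. Z j \<in> P) \<and>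
      W = E \<inter> (\<Inter>j\<in>{1..<k}. (T ^^ j) -` Z j) \<inter> (T ^^ k) -` E)}"

definition Vset :: "('a \<Rightarrow> 'a) \<Rightarrow> 'a set \<Rightarrow> 'a set set \<Rightarrow> 'a set set" where
  "Vset T E P = (\<Union>k\<in>{1..}. Vk T E P k)"

definition returns :: "('a \<Rightarrow> 'a) \<Rightarrow> 'a set \<Rightarrow> 'a \<Rightarrow> bool" where
  "returns T E x \<longleftrightarrow> (\<exists>l>0. (T ^^ l) x \<in> E)"

definition r_E :: "('a \<Rightarrow> 'a) \<Rightarrow> 'a set \<Rightarrow> 'a \<Rightarrow> nat" where
  "r_E T E x = (LEAST l. l > 0 \<and> (T ^^ l) x \<in> E)"

definition Y :: "('a \<Rightarrow> 'a) \<Rightarrow> 'a set \<Rightarrow> nat \<Rightarrow> nat \<Rightarrow> 'a set" where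
  "Y T E k l = (T ^^ l) ` {x\<in>E. returns T E x \<and> r_E T E x = k}"

definition Pbar :: "('a \<Rightarrow> 'a) \<Rightarrow> 'a set \<Rightarrow> 'a set set \<Rightarrow> 'a set set" where
  "Pbar T E P = {(T ^^ l) ` W | W k l. k \<ge> 1 \<and> W \<in> Vk T E P k \<and> l < k}"

definition orbit_closed :: "('a \<Rightarrow> 'a) \<Rightarrow> 'a set \<Rightarrow> 'a set set \<Rightarrow> bool" where
  "orbit_closed T E Q \<longleftrightarrow> (\<forall>Zb\<in>Q. \<forall>k. Zb \<subseteq> Y T E k 0 \<longrightarrow>
      (\<forall>i. 1 \<le> i \<and> i \<le> k - 1 \<longrightarrow> (T ^^ i) ` Zb \<in> Q))"

definition Ysets :: "('a \<Rightarrow> 'a) \<Rightarrow> 'a set \<Rightarrow> 'a set set" where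
  "Ysets T E = {Y T E k l | k l. l < k \<and> Y T E k l \<noteq> {}}"

text \<open>An element \<Sum> f_i t^i is represented by its coefficient function i \<mapsto> f_i
  (finitely many nonzero, each locally constant).\<close>
type_synonym ('a, 'k) cp = "int \<Rightarrow> 'a \<Rightarrow> 'k"

definition locally_constant :: "('a::topological_space \<Rightarrow> 'k) \<Rightarrow> bool" where
  "locally_constant f \<longleftrightarrow> (\<forall>x. \<exists>U. open U \<and> x \<in> U \<and> (\<forall>y\<in>U. f y = f x))"

definition cp_carrier :: "('a::topological_space, 'k::zero) cp set" where
  "cp_carrier = {a. finite {i. a i \<noteq> (\<lambda>_. 0)} \<and> (\<forall>i. locally_constant (a i))}"

text \<open>Product: (f t^i)(g t^j) = f (g \<circ> T^{-i}) t^{i+j}.\<close>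
definition cp_mult :: "('a \<Rightarrow> 'a) \<Rightarrow> ('a \<Rightarrow> 'a) \<Rightarrow> ('a, 'k::comm_ring_1) cp \<Rightarrow> ('a, 'k) cp \<Rightarrow> ('a, 'k) cp" where
  "cp_mult T Tinv a b = (\<lambda>n x. \<Sum>i\<in>{i. a i \<noteq> (\<lambda>_. 0)}. a i x * b (n - i) (Tz T Tinv (- i) x))"

definition cp_add :: "('a, 'k::plus) cp \<Rightarrow> ('a, 'k) cp \<Rightarrow> ('a, 'k) cp" where
  "cp_add a b = (\<lambda>n x. a n x + b n x)"

definition cp_smult :: "'k::times \<Rightarrow> ('a, 'k) cp \<Rightarrow> ('a, 'k) cp" where
  "cp_smult c a = (\<lambda>n x. c * a n x)"

text \<open>Involution: (f t^i)^* = t^{-i} f^* = (f^* \<circ> T^i) t^{-i}.\<close>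
definition cp_star :: "('a \<Rightarrow> 'a) \<Rightarrow> ('a \<Rightarrow> 'a) \<Rightarrow> ('k \<Rightarrow> 'k) \<Rightarrow> ('a, 'k) cp \<Rightarrow> ('a, 'k) cp" where
  "cp_star T Tinv invol a = (\<lambda>n x. invol (a (- n) (Tz T Tinv (- n) x)))"

definition cp_one :: "('a, 'k::{zero,one}) cp" where
  "cp_one = (\<lambda>n x. if n = 0 then 1 else 0)"

definition cp_fun :: "('a \<Rightarrow> 'k::zero) \<Rightarrow> ('a, 'k) cp" where
  "cp_fun f = (\<lambda>n x. if n = 0 then f x else 0)"

definition cp_chi_t :: "'a set \<Rightarrow> ('a, 'k::{zero,one}) cp" where
  "cp_chi_t Z = (\<lambda>n x. if n = 1 \<and> x \<in> Z then 1 else 0)"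

definition chi :: "'a set \<Rightarrow> 'a \<Rightarrow> 'k::{zero,one}" where
  "chi Z x = (if x \<in> Z then 1 else 0)"

inductive_set Bsub :: "('a \<Rightarrow> 'a) \<Rightarrow> ('a \<Rightarrow> 'a) \<Rightarrow> ('k::field \<Rightarrow> 'k) \<Rightarrow> 'a set set \<Rightarrow> ('a, 'k) cp set"
  for T Tinv invol P where
  gen: "Z \<in> P \<Longrightarrow> cp_chi_t Z \<in> Bsub T Tinv invol P"
| one: "cp_one \<in> Bsub T Tinv invol P"
| add: "a \<in> Bsub T Tinv invol P \<Longrightarrow> b \<in> Bsub T Tinv invol P \<Longrightarrow> cp_add a b \<in> Bsub T Tinv invol P"
| smult: "a \<in> Bsub T Tinv invol P \<Longrightarrow> cp_smult c a \<in> Bsub T Tinv invol P"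
| mult: "a \<in> Bsub T Tinv invol P \<Longrightarrow> b \<in> Bsub T Tinv invol P \<Longrightarrow> cp_mult T Tinv a b \<in> Bsub T Tinv invol P"
| star: "a \<in> Bsub T Tinv invol P \<Longrightarrow> cp_star T Tinv invol a \<in> Bsub T Tinv invol P"

definition field_involution :: "('k::field \<Rightarrow> 'k) \<Rightarrow> bool" where
  "field_involution invol \<longleftrightarrow> (\<forall>a b. invol (a + b) = invol a + invol b \<and> invol (a * b) = invol a * invol b)
     \<and> (\<forall>a. invol (invol a) = a)"

end

theory Submission
  imports Defs "HOL-Library.FuncSet"
begin

(* The members of V of length k are the cylinders W = E \<inter> T^-1 Z_1 \<inter> ... \<inter> T^-k E, which
   partition the first-return class Y_k^0; P-bar is the family of floors T^l W of the resulting
   Kakutani-Rokhlin tower over E. Floors are pairwise disjoint because no point of E revisits E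
   before its first return time, and they cover every point that visits E both in the past and in
   the future. By ergodicity (applied to T and to T^-1) almost every point does, so P-bar is a
   quasi-partition.

   For coarseness, let A \<subseteq> Y_k^l be a member of a quasi-partition Q with (2) and (3). As \<mu> is
   full, the open set T^-l A meets some C \<in> Q; C lies in the base Y_k^0, so T^l C \<in> Q meets A and
   equals A. Up to time k - 1 the orbit of C stays inside single cells of P, hence C lies in one
   cylinder W and A \<subseteq> T^l W.

   Finally, conjugating chi_S by a generator chi_Z t moves S one step along T or T^-1 and
   intersects it with Z; starting from chi_E = 1 - \<Sum> chi_Z this produces the indicator of
   every floor inside the algebra B. *)

section \<open>Iterated homeomorphisms and ergodic recurrence\<close>

lemma continuous_on_funpow:
  fixes f :: "'a::topological_space \<Rightarrow> 'a"
  shows "continuous_on UNIV f \<Longrightarrow> continuous_on UNIV (f ^^ n)"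
proof (induction n)
  case (Suc n)
  then show ?case
    by (simp add: continuous_on_compose2[of UNIV f UNIV "f ^^ n"])
qed simp

lemma homeomorphism_funpow:
  fixes f g :: "'a::topological_space \<Rightarrow> 'a"
  assumes "homeomorphism UNIV UNIV f g"
  shows "homeomorphism UNIV UNIV (f ^^ n) (g ^^ n)"
proof (induction n)
  case 0
  show ?case unfolding funpow.simps(1) id_def by (rule homeomorphism_ident)
next
  case (Suc n)
  show ?case
    using homeomorphism_compose[OF Suc assms] by (metis funpow.simps(2) funpow_Suc_right)
qed

lemma clopen_vimage:
  "continuous_on UNIV f \<Longrightarrow> clopen S \<Longrightarrow> clopen (f -` S)"
  unfolding clopen_def by (simp add: open_vimage closed_vimage)

lemma measure_vimage_eq:
  "T_invariant S \<mu> \<Longrightarrow> A \<in> sets borel \<Longrightarrow> measure \<mu> (S -` A) = measure \<mu> A"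
  unfolding T_invariant_def measure_def by simp

lemma T_invariant_inverse:
  assumes "homeomorphism UNIV UNIV f g" "T_invariant f \<mu>"
  shows "T_invariant g \<mu>"
  unfolding T_invariant_def
proof (intro ballI)
  fix A :: "'a set" assume A: "A \<in> sets borel"
  have "g -` A \<in> sets borel"
    using homeomorphism_cont2[OF assms(1)] A by (intro measurable_sets_borel[OF borel_measurable_continuous_onI])
  moreover have "f -` g -` A = A"
    using homeomorphism_apply1[OF assms(1)] by auto
  ultimately show "emeasure \<mu> (g -` A) = emeasure \<mu> A"
    using assms(2) unfolding T_invariant_def by metis
qed

lemma ergodic_inverse:
  assumes "homeomorphism UNIV UNIV f g" "ergodic f \<mu>"
  shows "ergodic g \<mu>"
  unfolding ergodic_def
proof (intro ballI impI)
  fix A :: "'a set" assume "A \<in> sets borel" "g -` A = A"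
  moreover have "f -` g -` A = A"
    using homeomorphism_apply1[OF assms(1)] by auto
  ultimately show "measure \<mu> A = 0 \<or> measure \<mu> A = 1"
    using assms(2) unfolding ergodic_def by metis
qed

lemma Inter_vimage_funpow_invariant:
  fixes S :: "'a::topological_space \<Rightarrow> 'a"
  assumes "prob_space \<mu>" and sets: "sets \<mu> = sets borel" and cont: "continuous_on UNIV S"
    and inv: "T_invariant S \<mu>" and U: "U \<in> sets borel" "S -` U \<subseteq> U"
  defines "H \<equiv> \<Inter>m. (S ^^ m) -` U"
  shows "S -` H = H" "H \<in> sets borel" "measure \<mu> H = measure \<mu> U"
proof -
  interpret prob_space \<mu> by fact
  have vimage_Suc: "S -` (S ^^ m) -` U = (S ^^ Suc m) -` U" for m
    by (auto simp: funpow_swap1)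
  have borel: "(S ^^ m) -` U \<in> sets borel" for m
    using measurable_sets_borel[OF borel_measurable_continuous_onI[OF continuous_on_funpow[OF cont]] U(1)] .
  have "(S ^^ Suc m) -` U \<subseteq> (S ^^ m) -` U" for m
    using U(2) by auto
  then have dec: "decseq (\<lambda>m. (S ^^ m) -` U)"
    by (rule decseq_SucI)
  have measure_const: "measure \<mu> ((S ^^ m) -` U) = measure \<mu> U" for m
    by (induction m) (simp, metis vimage_Suc measure_vimage_eq[OF inv borel])
  have "(\<lambda>m. measure \<mu> ((S ^^ m) -` U)) \<longlonglongrightarrow> measure \<mu> H"
    unfolding H_def using borel sets dec by (intro finite_Lim_measure_decseq) auto
  then show "measure \<mu> H = measure \<mu> U"
    by (simp add: measure_const LIMSEQ_const_iff)
  have "S -` H = (\<Inter>m. (S ^^ Suc m) -` U)"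
    unfolding H_def vimage_INT vimage_Suc ..
  also have "\<dots> = H"
  proof
    show "H \<subseteq> (\<Inter>m. (S ^^ Suc m) -` U)"
      unfolding H_def by blast
    have "(\<Inter>m. (S ^^ Suc m) -` U) \<subseteq> (S ^^ m) -` U" for m
      using decseqD[OF dec, of m "Suc m"] by auto
    then show "(\<Inter>m. (S ^^ Suc m) -` U) \<subseteq> H"
      unfolding H_def by (rule INT_greatest)
  qed
  finally show "S -` H = H" .
  show "H \<in> sets borel"
    unfolding H_def using borel by auto
qed

lemma ergodic_recurrence:
  fixes S :: "'a::topological_space \<Rightarrow> 'a"
  assumes "prob_space \<mu>" and sets: "sets \<mu> = sets borel" and cont: "continuous_on UNIV S"
    and inv: "T_invariant S \<mu>" and erg: "ergodic S \<mu>" and "open E" and "measure \<mu> E > 0"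
  shows "AE x in \<mu>. \<exists>n>0. (S ^^ n) x \<in> E"
proof -
  interpret prob_space \<mu> by fact
  define U where "U = (\<Union>n. (S ^^ n) -` E)"
  have vimage_U: "S -` U = {x. \<exists>n>0. (S ^^ n) x \<in> E}"
  proof (intro set_eqI iffI)
    fix x assume "x \<in> S -` U"
    then obtain n where "(S ^^ n) (S x) \<in> E"
      unfolding U_def by auto
    then show "x \<in> {x. \<exists>n>0. (S ^^ n) x \<in> E}"
      by (auto intro!: exI[of _ "Suc n"] simp: funpow_swap1)
  next
    fix x assume "x \<in> {x. \<exists>n>0. (S ^^ n) x \<in> E}"
    then obtain n where "(S ^^ Suc n) x \<in> E"
      by (auto simp: gr0_conv_Suc)
    then show "x \<in> S -` U"
      unfolding U_def by (auto simp: funpow_swap1)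
  qed
  have "U \<in> sets borel"
    unfolding U_def using continuous_on_funpow[OF cont] \<open>open E\<close>
    by (intro borel_open open_UN ballI open_vimage) auto
  moreover have "S -` U \<subseteq> U"
  proof
    fix x assume "x \<in> S -` U"
    then obtain n where "(S ^^ n) x \<in> E"
      unfolding vimage_U by blast
    then show "x \<in> U"
      unfolding U_def by blast
  qed
  define H where "H = (\<Inter>m. (S ^^ m) -` U)"
  have H: "S -` H = H" "H \<in> sets borel" "measure \<mu> H = measure \<mu> U"
    using Inter_vimage_funpow_invariant[OF \<open>prob_space \<mu>\<close> sets cont inv \<open>U \<in> sets borel\<close> \<open>S -` U \<subseteq> U\<close>]
    unfolding H_def by simp_all
  have "E \<subseteq> U"
    unfolding U_def by (auto intro!: exI[of _ 0])
  then have "measure \<mu> E \<le> measure \<mu> U"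
    using \<open>U \<in> sets borel\<close> sets by (intro finite_measure_mono) auto
  moreover have "measure \<mu> H = 0 \<or> measure \<mu> H = 1"
    using erg H(1,2) unfolding ergodic_def by blast
  ultimately have "measure \<mu> H = 1"
    using H(3) \<open>measure \<mu> E > 0\<close> by linarith
  moreover have "H \<subseteq> S -` U"
    using INT_lower[of 1 UNIV "\<lambda>m. (S ^^ m) -` U"] unfolding H_def by simp
  moreover have "S -` U \<in> events"
    using measurable_sets_borel[OF borel_measurable_continuous_onI[OF cont] \<open>U \<in> sets borel\<close>] sets by simp
  ultimately have "prob (S -` U) = 1"
    using finite_measure_mono measure_ge_1_iff by metis
  then have "AE x in \<mu>. x \<in> S -` U"
    by (rule AE_prob_1)
  then show ?thesis
    unfolding vimage_U by simp
qed

lemma open_meets_conull_set: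
  assumes "prob_space \<mu>" "sets \<mu> = sets borel" "full_measure \<mu>"
    and "measure \<mu> C = 1" "open U" "U \<noteq> {}"
  shows "U \<inter> C \<noteq> {}"
proof
  interpret prob_space \<mu> by fact
  assume "U \<inter> C = {}"
  have "C \<in> events"
    using \<open>measure \<mu> C = 1\<close> measure_notin_sets by fastforce
  then have "prob (space \<mu> - C) = 0"
    using \<open>measure \<mu> C = 1\<close> by (simp add: prob_compl)
  moreover have "U \<subseteq> space \<mu> - C" "U \<in> events"
    using \<open>U \<inter> C = {}\<close> \<open>open U\<close> assms(2) sets_eq_imp_space_eq[OF assms(2)] by auto
  ultimately have "prob U = 0"
    using \<open>C \<in> events\<close> finite_measure_mono[of U "space \<mu> - C"] by (simp add: measure_le_0_iff)
  with assms(3,5,6) show False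
    unfolding full_measure_def by auto
qed

section \<open>The tower of first returns to E\<close>

lemma mem_Y_0_iff:
  "x \<in> Y T E k 0 \<longleftrightarrow> x \<in> E \<and> 0 < k \<and> (T ^^ k) x \<in> E \<and> (\<forall>j. 0 < j \<and> j < k \<longrightarrow> (T ^^ j) x \<notin> E)"
proof
  assume "x \<in> Y T E k 0"
  then have x: "x \<in> E" "\<exists>l>0. (T ^^ l) x \<in> E" "k = (LEAST l. l > 0 \<and> (T ^^ l) x \<in> E)"
    unfolding Y_def returns_def r_E_def by auto
  show "x \<in> E \<and> 0 < k \<and> (T ^^ k) x \<in> E \<and> (\<forall>j. 0 < j \<and> j < k \<longrightarrow> (T ^^ j) x \<notin> E)"
    using x LeastI_ex[OF x(2)] not_less_Least[of _ "\<lambda>l. l > 0 \<and> (T ^^ l) x \<in> E"] by auto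
next
  assume x: "x \<in> E \<and> 0 < k \<and> (T ^^ k) x \<in> E \<and> (\<forall>j. 0 < j \<and> j < k \<longrightarrow> (T ^^ j) x \<notin> E)"
  then have "r_E T E x = k"
    unfolding r_E_def by (intro Least_equality) (auto simp: not_less[symmetric])
  with x show "x \<in> Y T E k 0"
    unfolding Y_def returns_def by auto
qed

lemma Y_eq_image: "Y T E k l = (T ^^ l) ` Y T E k 0"
  by (simp add: Y_def)

lemma Y_disjoint_E: "0 < j \<Longrightarrow> j < k \<Longrightarrow> Y T E k j \<inter> E = {}"
  unfolding Y_eq_image[of T E k j] by (auto simp: mem_Y_0_iff)

lemma Y_disjoint:
  assumes "inj T" "y \<in> Y T E k l" "y \<in> Y T E k' l'" "l < k" "l' < k'"
  shows "k = k' \<and> l = l'"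
  using assms(2-)
proof (induction l l' arbitrary: k k' rule: linorder_wlog)
  case (le l l')
  obtain x x' where x: "x \<in> Y T E k 0" "y = (T ^^ l) x" and x': "x' \<in> Y T E k' 0" "y = (T ^^ l') x'"
    using le.prems Y_eq_image[of T E k l] Y_eq_image[of T E k' l'] by auto
  have "(T ^^ l) x = (T ^^ l) ((T ^^ (l' - l)) x')"
    using x x' le.hyps by (metis funpow_add le_add_diff_inverse o_apply)
  then have "x = (T ^^ (l' - l)) x'"
    using inj_fn[OF assms(1)] by (auto dest: injD)
  moreover have "(T ^^ (l' - l)) x' \<notin> E" if "l < l'"
    using x' that le.prems by (auto simp: mem_Y_0_iff)
  ultimately have "l = l'"
    using x le.hyps by (auto simp: mem_Y_0_iff)
  with \<open>x = (T ^^ (l' - l)) x'\<close> have "k = k'"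
    using x x' by (simp add: Y_def)
  with \<open>l = l'\<close> show ?case
    by simp
qed (blast dest: sym)

locale return_tower =
  fixes T Tinv :: "'a::topological_space \<Rightarrow> 'a" and E :: "'a set" and P :: "'a set set"
  assumes homeo: "homeomorphism UNIV UNIV T Tinv"
    and E_clopen: "clopen E"
    and P_partition: "partition_of (UNIV - E) P"
begin

lemma homeo_funpow: "homeomorphism UNIV UNIV (T ^^ n) (Tinv ^^ n)"
  by (rule homeomorphism_funpow[OF homeo])

lemma funpow_Tinv_T [simp]: "(Tinv ^^ n) ((T ^^ n) x) = x"
  and funpow_T_Tinv [simp]: "(T ^^ n) ((Tinv ^^ n) x) = x"
  using homeomorphism_apply1[OF homeo_funpow] homeomorphism_apply2[OF homeo_funpow] by auto

lemma Tinv_T [simp]: "Tinv (T x) = x"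
  and T_Tinv [simp]: "T (Tinv x) = x"
  using funpow_Tinv_T[of 1] funpow_T_Tinv[of 1] by simp_all

lemma inj_T: "inj T"
  by (rule inj_on_inverseI[of _ Tinv]) simp

lemma funpow_T_eq_iff [simp]: "(T ^^ n) x = (T ^^ n) y \<longleftrightarrow> x = y"
  by (metis funpow_Tinv_T)

lemma continuous_funpow_T: "continuous_on UNIV (T ^^ n)"
  using homeomorphism_cont1[OF homeo_funpow] .

lemma image_funpow_T: "(T ^^ n) ` S = (Tinv ^^ n) -` S"
  by (auto intro: image_eqI[of _ _ "(Tinv ^^ n) _"])

lemma clopen_vimage_funpow_T: "clopen S \<Longrightarrow> clopen ((T ^^ n) -` S)"
  using clopen_vimage continuous_funpow_T by blast

lemma clopen_image_funpow_T: "clopen S \<Longrightarrow> clopen ((T ^^ n) ` S)"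
  unfolding image_funpow_T using clopen_vimage homeomorphism_cont2[OF homeo_funpow] by blast

lemma finite_P: "finite P"
  and clopen_P: "Z \<in> P \<Longrightarrow> clopen Z"
  and P_disjoint: "Z \<in> P \<Longrightarrow> Z' \<in> P \<Longrightarrow> Z \<noteq> Z' \<Longrightarrow> Z \<inter> Z' = {}"
  and Union_P: "\<Union>P = - E"
  using P_partition unfolding partition_of_def by auto

lemma P_disjoint_E: "Z \<in> P \<Longrightarrow> Z \<inter> E = {}"
  using Union_P by auto

definition cylinder :: "(nat \<Rightarrow> 'a set) \<Rightarrow> nat \<Rightarrow> 'a set" where
  "cylinder Z k = E \<inter> (\<Inter>j\<in>{1..<k}. (T ^^ j) -` Z j) \<inter> (T ^^ k) -` E"

lemma Vk_eq_cylinders: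
  "Vk T E P k = {cylinder Z k | Z. 1 \<le> k \<and> (\<forall>j\<in>{1..<k}. Z j \<in> P) \<and> cylinder Z k \<noteq> {}}"
  unfolding Vk_def cylinder_def by blast

lemma cylinder_subset_Y:
  assumes "\<forall>j\<in>{1..<k}. Z j \<in> P" "1 \<le> k"
  shows "cylinder Z k \<subseteq> Y T E k 0"
proof
  fix x assume x: "x \<in> cylinder Z k"
  have "(T ^^ j) x \<notin> E" if "0 < j" "j < k" for j
  proof -
    have "(T ^^ j) x \<in> Z j" "Z j \<in> P"
      using x assms that by (auto simp: cylinder_def)
    then show ?thesis
      using P_disjoint_E by blast
  qed
  then show "x \<in> Y T E k 0"
    using x assms by (auto simp: cylinder_def mem_Y_0_iff)
qed

lemma clopen_cylinder:
  assumes "\<forall>j\<in>{1..<k}. Z j \<in> P"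
  shows "clopen (cylinder Z k)"
proof -
  have "clopen ((T ^^ j) -` Z j)" if "j \<in> {1..<k}" for j
    using assms that by (intro clopen_vimage_funpow_T clopen_P) auto
  then have "clopen (\<Inter>j\<in>{1..<k}. (T ^^ j) -` Z j)"
    unfolding clopen_def by (auto intro: open_INT closed_INT)
  then show ?thesis
    using E_clopen clopen_vimage_funpow_T[OF E_clopen, of k]
    unfolding cylinder_def clopen_def by (auto intro: open_Int closed_Int)
qed

lemma cylinder_cong: "(\<And>j. j \<in> {1..<k} \<Longrightarrow> Z j = Z' j) \<Longrightarrow> cylinder Z k = cylinder Z' k"
  unfolding cylinder_def by auto

lemma cylinders_eq_if_meet:
  assumes "\<forall>j\<in>{1..<k}. Z j \<in> P" "\<forall>j\<in>{1..<k}. Z' j \<in> P"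
    and "x \<in> cylinder Z k" "x \<in> cylinder Z' k"
  shows "cylinder Z k = cylinder Z' k"
proof (rule cylinder_cong)
  fix j assume "j \<in> {1..<k}"
  moreover from this have "(T ^^ j) x \<in> Z j \<inter> Z' j"
    using assms(3,4) unfolding cylinder_def by auto
  ultimately show "Z j = Z' j"
    using P_disjoint assms(1,2) by blast
qed

lemma Vk_eq_if_meet:
  assumes "W \<in> Vk T E P k" "W' \<in> Vk T E P k" "x \<in> W" "x \<in> W'"
  shows "W = W'"
proof -
  obtain Z Z' where "\<forall>j\<in>{1..<k}. Z j \<in> P" "W = cylinder Z k"
    and "\<forall>j\<in>{1..<k}. Z' j \<in> P" "W' = cylinder Z' k"
    using assms(1,2) unfolding Vk_eq_cylinders by auto
  with assms(3,4) show ?thesis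
    using cylinders_eq_if_meet by simp
qed

lemma finite_Vk: "finite (Vk T E P k)"
proof -
  have "Vk T E P k \<subseteq> (\<lambda>Z. cylinder Z k) ` ({1..<k} \<rightarrow>\<^sub>E P)"
  proof
    fix W assume "W \<in> Vk T E P k"
    then obtain Z where Z: "\<forall>j\<in>{1..<k}. Z j \<in> P" "W = cylinder Z k"
      unfolding Vk_eq_cylinders by auto
    then have "W = cylinder (restrict Z {1..<k}) k"
      using cylinder_cong[of k "restrict Z {1..<k}" Z] by simp
    with Z show "W \<in> (\<lambda>Z. cylinder Z k) ` ({1..<k} \<rightarrow>\<^sub>E P)"
      by (auto intro!: image_eqI[of _ _ "restrict Z {1..<k}"])
  qed
  moreover have "finite ((\<lambda>Z. cylinder Z k) ` ({1..<k} \<rightarrow>\<^sub>E P))"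
    using finite_P by (simp add: finite_PiE)
  ultimately show ?thesis
    by (rule finite_subset)
qed

lemma Vk_covers_Y:
  assumes "x \<in> Y T E k 0"
  obtains W where "W \<in> Vk T E P k" "x \<in> W"
proof -
  have "\<forall>j\<in>{1..<k}. \<exists>Z\<in>P. (T ^^ j) x \<in> Z"
    using assms Union_P by (auto simp: mem_Y_0_iff)
  then obtain Z where Z: "\<forall>j\<in>{1..<k}. Z j \<in> P \<and> (T ^^ j) x \<in> Z j"
    by metis
  then have "x \<in> cylinder Z k"
    using assms by (auto simp: cylinder_def mem_Y_0_iff)
  moreover have "1 \<le> k"
    using assms by (simp add: mem_Y_0_iff)
  ultimately show thesis
    using Z by (intro that[of "cylinder Z k"]) (auto simp: Vk_eq_cylinders)
qed

lemma partition_Vk: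
  assumes "1 \<le> k"
  shows "partition_of (Y T E k 0) (Vk T E P k)"
  unfolding partition_of_def
proof (intro conjI)
  show "\<forall>W\<in>Vk T E P k. W \<noteq> {} \<and> clopen W"
    unfolding Vk_eq_cylinders using clopen_cylinder by auto
  show "\<forall>W\<in>Vk T E P k. \<forall>W'\<in>Vk T E P k. W \<noteq> W' \<longrightarrow> W \<inter> W' = {}"
    using Vk_eq_if_meet by (meson disjoint_iff)
  show "\<Union>(Vk T E P k) = Y T E k 0"
  proof
    show "\<Union>(Vk T E P k) \<subseteq> Y T E k 0"
      using cylinder_subset_Y assms by (auto simp: Vk_eq_cylinders)
    show "Y T E k 0 \<subseteq> \<Union>(Vk T E P k)"
      using Vk_covers_Y by blast
  qed
qed (rule finite_Vk)

lemma Vk_subset_Y: "W \<in> Vk T E P k \<Longrightarrow> W \<subseteq> Y T E k 0"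
  using cylinder_subset_Y by (auto simp: Vk_eq_cylinders)

lemma PbarE:
  assumes "A \<in> Pbar T E P"
  obtains W k l where "W \<in> Vk T E P k" "l < k" "A = (T ^^ l) ` W"
  using assms unfolding Pbar_def by blast

lemma PbarI: "W \<in> Vk T E P k \<Longrightarrow> l < k \<Longrightarrow> (T ^^ l) ` W \<in> Pbar T E P"
  unfolding Pbar_def Vk_def by blast

lemma countable_Pbar: "countable (Pbar T E P)"
proof -
  have "Pbar T E P = (\<Union>(k, l). (\<lambda>W. (T ^^ l) ` W) ` {W \<in> Vk T E P k. l < k})"
    unfolding Pbar_def Vk_def by blast
  also have "countable \<dots>"
    using finite_Vk by (intro countable_UN[OF countableI_type] countable_finite) auto
  finally show ?thesis .
qed

lemma Pbar_nonempty_clopen: "A \<in> Pbar T E P \<Longrightarrow> A \<noteq> {} \<and> clopen A"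
  by (elim PbarE) (auto simp: Vk_eq_cylinders intro!: clopen_image_funpow_T clopen_cylinder)

lemma image_Vk_subset_Y: "W \<in> Vk T E P k \<Longrightarrow> (T ^^ l) ` W \<subseteq> Y T E k l"
  using Vk_subset_Y Y_eq_image[of T E k l] by blast

lemma Pbar_disjoint:
  assumes "A \<in> Pbar T E P" "A' \<in> Pbar T E P" "y \<in> A" "y \<in> A'"
  shows "A = A'"
proof -
  obtain W k l where W: "W \<in> Vk T E P k" "l < k" "A = (T ^^ l) ` W"
    using assms(1) by (rule PbarE)
  obtain W' k' l' where W': "W' \<in> Vk T E P k'" "l' < k'" "A' = (T ^^ l') ` W'"
    using assms(2) by (rule PbarE)
  have "y \<in> Y T E k l" "y \<in> Y T E k' l'"
    using image_Vk_subset_Y W W' assms(3,4) by blast+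
  then have "k = k'" "l = l'"
    using Y_disjoint[OF inj_T] W(2) W'(2) by blast+
  moreover obtain x x' where "x \<in> W" "x' \<in> W'" "(T ^^ l) x = (T ^^ l') x'"
    using W W' assms(3,4) by auto
  ultimately have "W = W'"
    using Vk_eq_if_meet W(1) W'(1) by simp
  with W W' \<open>l = l'\<close> show ?thesis
    by simp
qed

lemma finer_Pbar_P_E: "finer (Pbar T E P) (P \<union> {E})"
  unfolding finer_def
proof
  fix A assume "A \<in> Pbar T E P"
  then obtain Z k l where Z: "\<forall>j\<in>{1..<k}. Z j \<in> P" "l < k" "A = (T ^^ l) ` cylinder Z k"
    by (elim PbarE) (auto simp: Vk_eq_cylinders)
  show "\<exists>B\<in>P \<union> {E}. A \<subseteq> B"
  proof (cases "l = 0")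
    case True
    then show ?thesis
      using Z by (auto simp: cylinder_def)
  next
    case False
    then have "A \<subseteq> Z l"
      using Z by (auto simp: cylinder_def)
    with Z False show ?thesis
      by auto
  qed
qed

lemma finer_Pbar_Ysets: "finer (Pbar T E P) (Ysets T E)"
  unfolding finer_def Ysets_def
proof
  fix A assume A: "A \<in> Pbar T E P"
  then obtain W k l where W: "W \<in> Vk T E P k" "l < k" "A = (T ^^ l) ` W"
    by (rule PbarE)
  then have "A \<subseteq> Y T E k l" "A \<noteq> {}"
    using image_Vk_subset_Y Pbar_nonempty_clopen[OF A] by auto
  with W(2) show "\<exists>B\<in>{Y T E k l |k l. l < k \<and> Y T E k l \<noteq> {}}. A \<subseteq> B"
    by blast
qed

lemma orbit_closed_Pbar: "orbit_closed T E (Pbar T E P)"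
  unfolding orbit_closed_def
proof (intro ballI allI impI)
  fix A k i assume A: "A \<in> Pbar T E P" and "A \<subseteq> Y T E k 0" and i: "1 \<le> i \<and> i \<le> k - 1"
  obtain W k' l where W: "W \<in> Vk T E P k'" "l < k'" "A = (T ^^ l) ` W"
    using A by (rule PbarE)
  obtain y where "y \<in> A" "y \<in> Y T E k 0"
    using Pbar_nonempty_clopen[OF A] \<open>A \<subseteq> Y T E k 0\<close> by auto
  moreover from this have "0 < k"
    by (simp add: mem_Y_0_iff)
  moreover have "y \<in> Y T E k' l"
    using image_Vk_subset_Y W \<open>y \<in> A\<close> by blast
  ultimately have "k' = k" "l = 0"
    using Y_disjoint[OF inj_T] W(2) by blast+
  with W i \<open>0 < k\<close> show "(T ^^ i) ` A \<in> Pbar T E P"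
    by (auto intro: PbarI)
qed

lemma two_sided_return_in_Union_Pbar:
  assumes "0 < n" "(T ^^ n) y \<in> E" "(Tinv ^^ m) y \<in> E"
  shows "y \<in> \<Union>(Pbar T E P)"
proof -
  (* j is the time of the latest visit to E, so y lies on floor j above x = T^-j y. *)
  define j where "j = (LEAST j. (Tinv ^^ j) y \<in> E)"
  define x where "x = (Tinv ^^ j) y"
  have "x \<in> E"
    unfolding x_def j_def using assms(3) by (rule LeastI)
  have y: "y = (T ^^ j) x"
    unfolding x_def by simp
  have not_E: "(T ^^ i) x \<notin> E" if "0 < i" "i \<le> j" for i
  proof -
    have "x = (Tinv ^^ i) ((Tinv ^^ (j - i)) y)"
      unfolding x_def using that(2) by (metis funpow_add le_add_diff_inverse o_apply)
    then have "(T ^^ i) x = (Tinv ^^ (j - i)) y"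
      by simp
    moreover have "(Tinv ^^ (j - i)) y \<notin> E"
      using not_less_Least[of "j - i" "\<lambda>j. (Tinv ^^ j) y \<in> E"] that unfolding j_def by auto
    ultimately show ?thesis
      by simp
  qed
  have "(T ^^ (n + j)) x \<in> E"
    using assms(2) y by (simp add: funpow_add)
  then have "returns T E x"
    unfolding returns_def using assms(1) by (intro exI[of _ "n + j"]) auto
  define k where "k = r_E T E x"
  have "x \<in> Y T E k 0"
    unfolding Y_def k_def using \<open>x \<in> E\<close> \<open>returns T E x\<close> by simp
  have "j < k"
  proof (rule ccontr)
    assume "\<not> j < k"
    then show False
      using not_E[of k] \<open>x \<in> Y T E k 0\<close> by (simp add: mem_Y_0_iff)
  qed
  obtain W where "W \<in> Vk T E P k" "x \<in> W"
    using Vk_covers_Y[OF \<open>x \<in> Y T E k 0\<close>] .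
  then show ?thesis
    using PbarI[of W k j] \<open>j < k\<close> y by blast
qed

lemma orbit_closed_base_subset_cylinder:
  assumes "finer Q (P \<union> {E})" "orbit_closed T E Q"
    and "B \<in> Q" "B \<subseteq> Y T E k 0" "B \<noteq> {}"
  obtains Z where "\<forall>j\<in>{1..<k}. Z j \<in> P" "B \<subseteq> cylinder Z k"
proof -
  have "\<exists>C. C \<in> P \<and> (T ^^ j) ` B \<subseteq> C" if j: "j \<in> {1..<k}" for j
  proof -
    have "1 \<le> j" "j \<le> k - 1"
      using j by auto
    then have "(T ^^ j) ` B \<in> Q"
      using assms(2-4) unfolding orbit_closed_def by blast
    then obtain C where "C \<in> P \<union> {E}" "(T ^^ j) ` B \<subseteq> C"
      using assms(1) unfolding finer_def by blast
    moreover have "(T ^^ j) ` B \<subseteq> Y T E k j"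
      using assms(4) Y_eq_image[of T E k j] by blast
    moreover have "\<not> (T ^^ j) ` B \<subseteq> E"
      using Y_disjoint_E[of j k T E] j \<open>B \<noteq> {}\<close> calculation(3) by auto
    ultimately show ?thesis
      by blast
  qed
  then obtain Z where Z: "\<forall>j\<in>{1..<k}. Z j \<in> P \<and> (T ^^ j) ` B \<subseteq> Z j"
    using bchoice[of "{1..<k}"] by meson
  have "B \<subseteq> cylinder Z k"
    using Z assms(4) by (auto simp: cylinder_def mem_Y_0_iff)
  with Z show thesis
    using that by blast
qed

end

section \<open>P-bar is the coarsest quasi-partition\<close>

locale ergodic_return_tower = return_tower T Tinv E P
  for T Tinv :: "'a::topological_space \<Rightarrow> 'a" and E P +
  fixes \<mu> :: "'a measure"
  assumes prob: "prob_space \<mu>"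
    and sets_borel: "sets \<mu> = sets borel"
    and full: "full_measure \<mu>"
    and invariant: "T_invariant T \<mu>"
    and ergodic: "ergodic T \<mu>"
    and E_nonempty: "E \<noteq> {}"
begin

interpretation prob_space \<mu>
  by (rule prob)

lemma measure_Union_Pbar: "measure \<mu> (\<Union>(Pbar T E P)) = 1"
proof -
  have "open E" "measure \<mu> E > 0"
    using E_clopen E_nonempty full unfolding clopen_def full_measure_def by auto
  then have "AE x in \<mu>. \<exists>n>0. (T ^^ n) x \<in> E" "AE x in \<mu>. \<exists>n>0. (Tinv ^^ n) x \<in> E"
    using ergodic_recurrence[OF prob sets_borel] homeomorphism_cont1[OF homeo] homeomorphism_cont2[OF homeo]
      invariant ergodic T_invariant_inverse[OF homeo] ergodic_inverse[OF homeo]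
    by blast+
  then have "AE x in \<mu>. x \<in> \<Union>(Pbar T E P)"
    by eventually_elim (blast intro: two_sided_return_in_Union_Pbar)
  moreover have "open (\<Union>(Pbar T E P))"
    using Pbar_nonempty_clopen unfolding clopen_def by blast
  then have "\<Union>(Pbar T E P) \<in> events"
    using sets_borel by simp
  ultimately show ?thesis
    using AE_in_set_eq_1 by blast
qed

lemma quasi_partition_Pbar: "quasi_partition \<mu> (Pbar T E P)"
  unfolding quasi_partition_def
  using countable_Pbar Pbar_nonempty_clopen Pbar_disjoint measure_Union_Pbar by blast

lemma quasi_partition_member_image_of_base:
  assumes Q: "quasi_partition \<mu> Q" "finer Q (Ysets T E)" "orbit_closed T E Q"
    and A: "A \<in> Q" "l < k" "A \<subseteq> Y T E k l"
  obtains B where "B \<in> Q" "B \<subseteq> Y T E k 0" "A = (T ^^ l) ` B"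
proof -
  have Q_disjoint: "\<And>A A'. A \<in> Q \<Longrightarrow> A' \<in> Q \<Longrightarrow> A \<noteq> A' \<Longrightarrow> A \<inter> A' = {}"
    and "open A" "A \<noteq> {}" "measure \<mu> (\<Union>Q) = 1"
    using Q(1) A(1) unfolding quasi_partition_def clopen_def by auto
  then obtain a where "a \<in> A"
    by blast
  have "open ((T ^^ l) -` A)"
    using open_vimage[OF \<open>open A\<close> continuous_funpow_T] .
  moreover have "(Tinv ^^ l) a \<in> (T ^^ l) -` A"
    using \<open>a \<in> A\<close> by simp
  ultimately have "(T ^^ l) -` A \<inter> \<Union>Q \<noteq> {}"
    using open_meets_conull_set[OF prob sets_borel full \<open>measure \<mu> (\<Union>Q) = 1\<close>] by blast
  then obtain B b where "B \<in> Q" "b \<in> B" "(T ^^ l) b \<in> A"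
    by blast
  have "b \<in> Y T E k 0"
    using \<open>(T ^^ l) b \<in> A\<close> A(3) Y_eq_image[of T E k l] by auto
  then have "0 < k"
    by (simp add: mem_Y_0_iff)
  obtain k' l' where "l' < k'" "B \<subseteq> Y T E k' l'"
    using Q(2) \<open>B \<in> Q\<close> unfolding finer_def Ysets_def by blast
  then have "k' = k \<and> l' = 0"
    using Y_disjoint[OF inj_T _ \<open>b \<in> Y T E k 0\<close> _ \<open>0 < k\<close>] \<open>b \<in> B\<close> by blast
  with \<open>B \<subseteq> Y T E k' l'\<close> have "B \<subseteq> Y T E k 0"
    by simp
  have "(T ^^ l) ` B \<in> Q"
  proof (cases "l = 0")
    case True
    with \<open>B \<in> Q\<close> show ?thesis
      by simp
  next
    case False
    then have "1 \<le> l" "l \<le> k - 1"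
      using A(2) by auto
    with \<open>B \<in> Q\<close> \<open>B \<subseteq> Y T E k 0\<close> Q(3) show ?thesis
      unfolding orbit_closed_def by blast
  qed
  moreover have "(T ^^ l) b \<in> (T ^^ l) ` B \<inter> A"
    using \<open>b \<in> B\<close> \<open>(T ^^ l) b \<in> A\<close> by blast
  ultimately have "A = (T ^^ l) ` B"
    using Q_disjoint[OF A(1)] by blast
  with \<open>B \<in> Q\<close> \<open>B \<subseteq> Y T E k 0\<close> show thesis
    using that by blast
qed

lemma Pbar_coarsest:
  assumes "quasi_partition \<mu> Q" "finer Q (P \<union> {E})" "finer Q (Ysets T E)" "orbit_closed T E Q"
  shows "finer Q (Pbar T E P)"
  unfolding finer_def
proof
  fix A assume "A \<in> Q"
  then obtain k l where "l < k" "A \<subseteq> Y T E k l"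
    using assms(3) unfolding finer_def Ysets_def by blast
  then obtain B where B: "B \<in> Q" "B \<subseteq> Y T E k 0" "A = (T ^^ l) ` B"
    by (rule quasi_partition_member_image_of_base[OF assms(1,3,4) \<open>A \<in> Q\<close>])
  moreover have "B \<noteq> {}"
    using assms(1) B(1) unfolding quasi_partition_def by blast
  ultimately obtain Z where Z: "\<forall>j\<in>{1..<k}. Z j \<in> P" "B \<subseteq> cylinder Z k"
    using orbit_closed_base_subset_cylinder[OF assms(2,4)] by blast
  then have "cylinder Z k \<in> Vk T E P k"
    using \<open>B \<noteq> {}\<close> \<open>l < k\<close> by (auto simp: Vk_eq_cylinders)
  then have "(T ^^ l) ` cylinder Z k \<in> Pbar T E P"
    using \<open>l < k\<close> by (rule PbarI)
  moreover have "A \<subseteq> (T ^^ l) ` cylinder Z k"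
    using B(3) Z(2) by auto
  ultimately show "\<exists>A'\<in>Pbar T E P. A \<subseteq> A'"
    by blast
qed

end

section \<open>Indicators of the floors lie in B\<close>

definition cp_monom :: "('a \<Rightarrow> 'k::zero) \<Rightarrow> int \<Rightarrow> ('a, 'k) cp" where
  "cp_monom f m = (\<lambda>n. if n = m then f else (\<lambda>_. 0))"

lemma cp_fun_eq_monom: "cp_fun f = cp_monom f 0"
  unfolding cp_fun_def cp_monom_def by (auto simp: fun_eq_iff)

lemma cp_chi_t_eq_monom: "cp_chi_t Z = cp_monom (chi Z) 1"
  unfolding cp_chi_t_def cp_monom_def chi_def by (auto simp: fun_eq_iff)

lemma cp_one_eq_monom: "cp_one = cp_monom (chi UNIV) 0"
  unfolding cp_one_def cp_monom_def chi_def by (auto simp: fun_eq_iff)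

lemma cp_mult_monom:
  "cp_mult T Tinv (cp_monom f i) (cp_monom g j) = cp_monom (\<lambda>x. f x * g (Tz T Tinv (- i) x)) (i + j)"
proof (cases "f = (\<lambda>_. 0)")
  case True
  then have "{i'. cp_monom f i i' \<noteq> (\<lambda>_. 0)} = {}"
    unfolding cp_monom_def by auto
  with True show ?thesis
    unfolding cp_mult_def by (auto simp: cp_monom_def fun_eq_iff)
next
  case False
  then have "{i'. cp_monom f i i' \<noteq> (\<lambda>_. 0)} = {i}"
    unfolding cp_monom_def by auto
  then show ?thesis
    unfolding cp_mult_def by (auto simp: cp_monom_def fun_eq_iff)
qed

lemma cp_add_monom: "cp_add (cp_monom f m) (cp_monom g m) = cp_monom (\<lambda>x. f x + g x :: 'k::comm_monoid_add) m"
  unfolding cp_add_def cp_monom_def by (auto simp: fun_eq_iff)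

lemma cp_smult_monom: "cp_smult c (cp_monom f m) = cp_monom (\<lambda>x. c * f x :: 'k::mult_zero) m"
  unfolding cp_smult_def cp_monom_def by (auto simp: fun_eq_iff)

lemma cp_star_monom:
  "invol 0 = 0 \<Longrightarrow> cp_star T Tinv invol (cp_monom f i) = cp_monom (\<lambda>x. invol (f (Tz T Tinv i x))) (- i)"
  unfolding cp_star_def cp_monom_def by (auto simp: fun_eq_iff)

lemma Tz_1 [simp]: "Tz T Tinv 1 = T"
  and Tz_minus_1 [simp]: "Tz T Tinv (- 1) = Tinv"
  and Tz_0 [simp]: "Tz T Tinv 0 = id"
  by (simp_all add: Tz_def)

lemma field_involution_0:
  assumes "field_involution invol"
  shows "invol 0 = 0"
proof -
  have "invol 0 = invol 0 + invol 0"
    using assms unfolding field_involution_def by (metis add_0)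
  then show ?thesis
    using add_cancel_right_right by blast
qed

lemma field_involution_1:
  assumes "field_involution invol"
  shows "invol 1 = 1"
proof -
  have "invol 1 * invol 1 = invol 1"
    using assms unfolding field_involution_def by (metis mult_1)
  moreover have "invol 1 \<noteq> 0"
    using assms field_involution_0[OF assms] unfolding field_involution_def by (metis one_neq_zero)
  ultimately show ?thesis
    by simp
qed

definition Bsub_sets :: "('a \<Rightarrow> 'a) \<Rightarrow> ('a \<Rightarrow> 'a) \<Rightarrow> ('k::field \<Rightarrow> 'k) \<Rightarrow> 'a set set \<Rightarrow> 'a set set" where
  "Bsub_sets T Tinv invol P = {S. (cp_fun (chi S) :: ('a, 'k) cp) \<in> Bsub T Tinv invol P}"

context
  fixes T Tinv :: "'a \<Rightarrow> 'a" and invol :: "'k::field \<Rightarrow> 'k" and P :: "'a set set"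
  assumes invol: "field_involution invol"
begin

lemma UNIV_in_Bsub_sets: "UNIV \<in> Bsub_sets T Tinv invol P"
  using Bsub.one unfolding Bsub_sets_def by (simp add: cp_fun_eq_monom cp_one_eq_monom)

lemma Int_in_Bsub_sets:
  assumes "S \<in> Bsub_sets T Tinv invol P" "S' \<in> Bsub_sets T Tinv invol P"
  shows "S \<inter> S' \<in> Bsub_sets T Tinv invol P"
proof -
  have "cp_mult T Tinv (cp_fun (chi S)) (cp_fun (chi S')) \<in> Bsub T Tinv invol P"
    using assms unfolding Bsub_sets_def by (simp add: Bsub.mult)
  moreover have "cp_mult T Tinv (cp_fun (chi S)) (cp_fun (chi S')) = (cp_fun (chi (S \<inter> S')) :: ('a, 'k) cp)"
    unfolding cp_fun_eq_monom cp_mult_monom by (simp add: chi_def cp_monom_def fun_eq_iff)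
  ultimately show ?thesis
    unfolding Bsub_sets_def by simp
qed

lemma Compl_in_Bsub_sets:
  assumes "S \<in> Bsub_sets T Tinv invol P"
  shows "- S \<in> Bsub_sets T Tinv invol P"
proof -
  have "cp_add cp_one (cp_smult (- 1) (cp_fun (chi S))) \<in> Bsub T Tinv invol P"
    using assms unfolding Bsub_sets_def by (intro Bsub.add Bsub.one Bsub.smult) simp
  moreover have "cp_add cp_one (cp_smult (- 1) (cp_fun (chi S))) = (cp_fun (chi (- S)) :: ('a, 'k) cp)"
    unfolding cp_fun_eq_monom cp_one_eq_monom cp_smult_monom cp_add_monom
    by (simp add: chi_def cp_monom_def fun_eq_iff)
  ultimately show ?thesis
    unfolding Bsub_sets_def by simp
qed

lemma Un_in_Bsub_sets:
  assumes "S \<in> Bsub_sets T Tinv invol P" "S' \<in> Bsub_sets T Tinv invol P"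
  shows "S \<union> S' \<in> Bsub_sets T Tinv invol P"
  using Compl_in_Bsub_sets[OF Int_in_Bsub_sets[OF Compl_in_Bsub_sets[OF assms(1)] Compl_in_Bsub_sets[OF assms(2)]]]
  by simp

lemma Union_in_Bsub_sets:
  "finite F \<Longrightarrow> F \<subseteq> Bsub_sets T Tinv invol P \<Longrightarrow> \<Union>F \<in> Bsub_sets T Tinv invol P"
proof (induction F rule: finite_induct)
  case empty
  show ?case
    using Compl_in_Bsub_sets[OF UNIV_in_Bsub_sets] by simp
qed (simp add: Un_in_Bsub_sets)

(* (chi_Z t)^* chi_S (chi_Z t) = chi_{T^-1 (Z \<inter> S)} *)
lemma vimage_Int_in_Bsub_sets:
  assumes "Z \<in> P" "S \<in> Bsub_sets T Tinv invol P"
  shows "T -` (Z \<inter> S) \<in> Bsub_sets T Tinv invol P"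
proof -
  let ?g = "cp_chi_t Z :: ('a, 'k) cp"
  have "cp_mult T Tinv (cp_mult T Tinv (cp_star T Tinv invol ?g) (cp_fun (chi S))) ?g \<in> Bsub T Tinv invol P"
    using assms unfolding Bsub_sets_def by (intro Bsub.mult Bsub.star Bsub.gen) simp_all
  moreover have "cp_mult T Tinv (cp_mult T Tinv (cp_star T Tinv invol ?g) (cp_fun (chi S))) ?g
      = cp_fun (chi (T -` (Z \<inter> S)))"
    unfolding cp_fun_eq_monom cp_chi_t_eq_monom cp_star_monom[where invol=invol, OF field_involution_0[OF invol]] cp_mult_monom
    by (simp add: chi_def cp_monom_def fun_eq_iff field_involution_0[OF invol] field_involution_1[OF invol])
  ultimately show ?thesis
    unfolding Bsub_sets_def by simp
qed

(* (chi_Z t) chi_S (chi_Z t)^* = chi_{Z \<inter> T S} *)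
lemma Int_vimage_in_Bsub_sets:
  assumes "\<And>x. T (Tinv x) = x" "Z \<in> P" "S \<in> Bsub_sets T Tinv invol P"
  shows "Z \<inter> Tinv -` S \<in> Bsub_sets T Tinv invol P"
proof -
  let ?g = "cp_chi_t Z :: ('a, 'k) cp"
  have "cp_mult T Tinv (cp_mult T Tinv ?g (cp_fun (chi S))) (cp_star T Tinv invol ?g) \<in> Bsub T Tinv invol P"
    using assms unfolding Bsub_sets_def by (intro Bsub.mult Bsub.star Bsub.gen) simp_all
  moreover have "cp_mult T Tinv (cp_mult T Tinv ?g (cp_fun (chi S))) (cp_star T Tinv invol ?g)
      = cp_fun (chi (Z \<inter> Tinv -` S))"
    unfolding cp_fun_eq_monom cp_chi_t_eq_monom cp_star_monom[where invol=invol, OF field_involution_0[OF invol]] cp_mult_monom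
    by (simp add: chi_def cp_monom_def fun_eq_iff field_involution_0[OF invol] field_involution_1[OF invol] assms(1))
  ultimately show ?thesis
    unfolding Bsub_sets_def by simp
qed

lemma generator_in_Bsub_sets:
  "(\<And>x. T (Tinv x) = x) \<Longrightarrow> Z \<in> P \<Longrightarrow> Z \<in> Bsub_sets T Tinv invol P"
  using Int_vimage_in_Bsub_sets[OF _ _ UNIV_in_Bsub_sets] by fastforce

end

lemma ball_atLeastAtMost_Suc_shift:
  "(\<forall>j\<in>{1..Suc n}. Q j) \<longleftrightarrow> Q 1 \<and> (\<forall>j\<in>{1..n}. Q (Suc j))"
proof -
  have "{1..Suc n} = insert 1 (Suc ` {1..n})"
    by (simp add: atLeastAtMost_insertL)
  then show ?thesis
    by (simp del: image_Suc_atLeastAtMost)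
qed

context return_tower
begin

context
  fixes invol :: "'k::field \<Rightarrow> 'k"
  assumes invol: "field_involution invol"
begin

abbreviation (input) B :: "'a set set" where
  "B \<equiv> Bsub_sets T Tinv invol P"

lemma E_in_Bsub_sets: "E \<in> B"
proof -
  have "\<Union>P \<in> B"
    using finite_P generator_in_Bsub_sets[where T=T and Tinv=Tinv, OF invol T_Tinv]
    by (intro Union_in_Bsub_sets[OF invol]) auto
  then show ?thesis
    using Compl_in_Bsub_sets[OF invol] Union_P by fastforce
qed

lemma vimage_E_in_Bsub_sets: "T -` E \<in> B"
proof -
  have "(\<Union>Z\<in>P. T -` (Z \<inter> UNIV)) \<in> B"
    using finite_P vimage_Int_in_Bsub_sets[where invol=invol, OF invol _ UNIV_in_Bsub_sets[OF invol]]
    by (intro Union_in_Bsub_sets[OF invol]) auto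
  moreover have "- (\<Union>Z\<in>P. T -` (Z \<inter> UNIV)) = T -` E"
    using Union_P by auto
  ultimately show ?thesis
    using Compl_in_Bsub_sets[OF invol] by metis
qed

lemma return_path_in_Bsub_sets:
  "\<forall>j\<in>{1..n}. Z j \<in> P \<Longrightarrow> {x. (\<forall>j\<in>{1..n}. (T ^^ j) x \<in> Z j) \<and> (T ^^ Suc n) x \<in> E} \<in> B"
proof (induction n arbitrary: Z)
  case 0
  then show ?case
    using vimage_E_in_Bsub_sets by (simp add: vimage_def)
next
  case (Suc n)
  let ?S = "{x. (\<forall>j\<in>{1..n}. (T ^^ j) x \<in> Z (Suc j)) \<and> (T ^^ Suc n) x \<in> E}"
  have "?S \<in> B"
    using Suc by simp
  then have "T -` (Z 1 \<inter> ?S) \<in> B"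
    using Suc.prems by (intro vimage_Int_in_Bsub_sets[OF invol]) auto
  moreover have "T -` (Z 1 \<inter> ?S) = {x. (\<forall>j\<in>{1..Suc n}. (T ^^ j) x \<in> Z j) \<and> (T ^^ Suc (Suc n)) x \<in> E}"
    unfolding ball_atLeastAtMost_Suc_shift by (auto simp: funpow_swap1)
  ultimately show ?case
    by simp
qed

lemma cylinder_in_Bsub_sets:
  assumes "\<forall>j\<in>{1..<k}. Z j \<in> P" "1 \<le> k"
  shows "cylinder Z k \<in> B"
proof -
  obtain n where k: "k = Suc n"
    using assms(2) by (metis Suc_le_D One_nat_def)
  then have "cylinder Z k = E \<inter> {x. (\<forall>j\<in>{1..n}. (T ^^ j) x \<in> Z j) \<and> (T ^^ Suc n) x \<in> E}"
    unfolding cylinder_def by (auto simp: atLeastLessThanSuc_atLeastAtMost)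
  moreover have "{x. (\<forall>j\<in>{1..n}. (T ^^ j) x \<in> Z j) \<and> (T ^^ Suc n) x \<in> E} \<in> B"
    using assms(1) k by (intro return_path_in_Bsub_sets) (simp add: atLeastLessThanSuc_atLeastAtMost)
  ultimately show ?thesis
    using Int_in_Bsub_sets[OF invol E_in_Bsub_sets] by simp
qed

lemma image_cylinder_in_Bsub_sets:
  assumes "\<forall>j\<in>{1..<k}. Z j \<in> P" "l < k"
  shows "(T ^^ l) ` cylinder Z k \<in> B"
  using assms(2)
proof (induction l)
  case 0
  then show ?case
    using cylinder_in_Bsub_sets[OF assms(1)] by simp
next
  case (Suc l)
  have "(T ^^ Suc l) ` cylinder Z k = Z (Suc l) \<inter> Tinv -` ((T ^^ l) ` cylinder Z k)"
  proof
    show "(T ^^ Suc l) ` cylinder Z k \<subseteq> Z (Suc l) \<inter> Tinv -` ((T ^^ l) ` cylinder Z k)"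
    proof (rule image_subsetI)
      fix x assume "x \<in> cylinder Z k"
      then have "(T ^^ Suc l) x \<in> Z (Suc l)"
        using Suc.prems unfolding cylinder_def by (auto dest: bspec[of _ _ "Suc l"])
      with \<open>x \<in> cylinder Z k\<close> show "(T ^^ Suc l) x \<in> Z (Suc l) \<inter> Tinv -` ((T ^^ l) ` cylinder Z k)"
        by simp
    qed
    show "Z (Suc l) \<inter> Tinv -` ((T ^^ l) ` cylinder Z k) \<subseteq> (T ^^ Suc l) ` cylinder Z k"
      by (auto intro: image_eqI[of _ _ "(T ^^ l) _"] simp: image_iff) (metis T_Tinv)
  qed
  moreover have "Z (Suc l) \<in> P"
    using assms(1) Suc.prems by simp
  ultimately show ?case
    using Int_vimage_in_Bsub_sets[where T=T and Tinv=Tinv, OF invol T_Tinv] Suc by simp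
qed

lemma chi_Pbar_in_Bsub: "A \<in> Pbar T E P \<Longrightarrow> (cp_fun (chi A) :: ('a, 'k) cp) \<in> Bsub T Tinv invol P"
  using image_cylinder_in_Bsub_sets unfolding Bsub_sets_def
  by (elim PbarE) (auto simp: Vk_eq_cylinders)

end

end

theorem lemma3p9:
  fixes T Tinv :: "'a::metric_space \<Rightarrow> 'a"
    and \<mu> :: "'a measure"
    and invol :: "'k::field \<Rightarrow> 'k"
    and E :: "'a set" and P :: "'a set set"
  assumes X_infinite: "infinite (UNIV :: 'a set)"
    and X_compact: "compact (UNIV :: 'a set)"
    and X_tdisc: "totally_disconnected_space TYPE('a)"
    and T_homeo: "homeomorphism UNIV UNIV T Tinv"
    and mu_prob: "prob_space \<mu>"
    and mu_sets: "sets \<mu> = sets borel"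
    and mu_full: "full_measure \<mu>"
    and mu_inv: "T_invariant T \<mu>"
    and mu_erg: "ergodic T \<mu>"
    and K_inv: "field_involution invol"
    and E_clopen: "clopen E" and E_ne: "E \<noteq> {}"
    and P_part: "partition_of (UNIV - E) P"
  shows "(\<forall>k\<ge>1. partition_of (Y T E k 0) (Vk T E P k))
       \<and> quasi_partition \<mu> (Pbar T E P)
       \<and> finer (Pbar T E P) (P \<union> {E})
       \<and> finer (Pbar T E P) (Ysets T E)
       \<and> orbit_closed T E (Pbar T E P)
       \<and> (\<forall>Q. quasi_partition \<mu> Q \<and> finer Q (P \<union> {E}) \<and> finer Q (Ysets T E)
              \<and> orbit_closed T E Q \<longrightarrow> finer Q (Pbar T E P))
       \<and> (\<forall>Zb\<in>Pbar T E P. cp_fun (chi Zb) \<in> Bsub T Tinv invol P)"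
proof -
  interpret ergodic_return_tower T Tinv E P \<mu>
    using T_homeo E_clopen P_part mu_prob mu_sets mu_full mu_inv mu_erg E_ne
    by (simp add: ergodic_return_tower_def ergodic_return_tower_axioms_def return_tower_def)
  show ?thesis
    using partition_Vk quasi_partition_Pbar finer_Pbar_P_E finer_Pbar_Ysets orbit_closed_Pbar
      Pbar_coarsest chi_Pbar_in_Bsub[OF K_inv] by blast
qed

end
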